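(* Let $g=\frac{\sqrt5-1}2$, $g\le\alpha<\beta\le1$, and $(x,y)\in\Omega_\alpha$ with $y<1-\frac1{\sqrt2}$. Then $S(x,y)\cap\Omega_\beta\ne\emptyset$.
   Context: For $\alpha\in[\tfrac12,1]$: $T_\alpha(x)=\frac1x-\lfloor\frac1x+1-\alpha\rfloor$ on $[\alpha-1,\alpha)\setminus\{0\}$, $T_\alpha(0)=0$; $\mathcal T_\alpha(x,y)=\left(T_\alpha(x),\frac{1}{y+\lfloor\frac1x+1-\alpha\rfloor}\right)$ for $x\ne0$, $\mathcal T_\alpha(0,y)=(0,0)$; $\Omega_\alpha=\bigcup_{n\ge0}\overline{\mathcal T_\alpha^n([\alpha-1,\alpha)\times\{0\})}$. For a point $(x,y)$, $S(x,y)=\{(x,y),(-x,-y),(x+1,\frac{y}{1-y}),(1-x,\frac{-y}{y+1})\}$. *)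

theory Defs
  imports "HOL-Analysis.Analysis"
begin

text \<open>The alpha-continued fraction map T_alpha (intended domain [alpha-1, alpha)).\<close>
definition Talpha :: "real \<Rightarrow> real \<Rightarrow> real" where
  "Talpha \<alpha> x = (if x = 0 then 0 else 1 / x - of_int \<lfloor>1 / x + 1 - \<alpha>\<rfloor>)"

definition TTalpha :: "real \<Rightarrow> real \<times> real \<Rightarrow> real \<times> real" where
  "TTalpha \<alpha> p = (if fst p = 0 then (0, 0)
     else (Talpha \<alpha> (fst p), 1 / (snd p + of_int \<lfloor>1 / fst p + 1 - \<alpha>\<rfloor>)))"

definition Omega :: "real \<Rightarrow> (real \<times> real) set" where
  "Omega \<alpha> = (\<Union>n::nat. closure ((TTalpha \<alpha> ^^ n) ` ({\<alpha> - 1..<\<alpha>} \<times> {0})))"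

definition Sset :: "real \<Rightarrow> real \<Rightarrow> (real \<times> real) set" where
  "Sset x y = {(x, y), (-x, -y), (x + 1, y / (1 - y)), (1 - x, - y / (y + 1))}"

end

theory Submission
  imports Defs
begin

text \<open>Each point of an \<alpha>-orbit of some (x0, 0) is matched with a point at most two steps further
  along a \<beta>-orbit, obtained from it by one of the four maps defining S or, when
  y \<ge> 1 - 1/sqrt 2, by (x, y) \<mapsto> (-x/(x+1), 1-y) or (x/(x+1), y-1). One step of the \<alpha>-map is
  answered by one or two steps of the \<beta>-map because the \<alpha>- and \<beta>-digits of matched points differ
  by a bounded amount; for \<alpha> \<ge> g the orbits stay in a region (-1/2 \<le> y \<le> sqrt 2, plus two
  one-sided bounds) where all denominators are nonzero. Below y = 1 - 1/sqrt 2 only the four maps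
  of S occur. They are continuous there, and only finitely many maps and orbit levels are
  involved, so the matching passes to the closures defining Omega.\<close>

lemma golden_conjugate_le_imp:
  fixes a :: real
  assumes "(sqrt 5 - 1) / 2 \<le> a"
  shows "0 < a" and "1 \<le> a * a + a"
proof -
  define g where "g = (sqrt 5 - 1) / 2"
  have "sqrt 5 * sqrt 5 = 5" "1 < sqrt 5" by simp_all
  then have factor: "a * a + a - 1 = (a - g) * (a + g + 1)" and "0 < g"
    unfolding g_def by (simp_all add: algebra_simps) (simp add: field_simps)
  with assms show "0 < a" unfolding g_def[symmetric] by linarith
  with \<open>0 < g\<close> assms have "0 \<le> (a - g) * (a + g + 1)" unfolding g_def[symmetric] by simp
  with factor show "1 \<le> a * a + a" by linarith
qed

lemma sqrt2_bounds: "141/100 < sqrt 2" "sqrt 2 < 142/100" "0 < 1 / sqrt 2" "1 / sqrt 2 < 71/100"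
proof -
  show "141/100 < sqrt 2" by (rule real_less_rsqrt) (simp add: power2_eq_square)
  show "sqrt 2 < 142/100" by (rule real_less_lsqrt) (simp_all add: power2_eq_square)
  have "sqrt 2 * sqrt 2 = 2" by simp
  then have "1 / sqrt 2 = sqrt 2 / 2" by (simp add: field_simps)
  with \<open>sqrt 2 < 142/100\<close> show "0 < 1 / sqrt 2" "1 / sqrt 2 < 71/100" by simp_all
qed

lemma sqrt2_reciprocals:
  "1 / (1 + 1 / sqrt 2) = 2 - sqrt 2" "1 / (2 + sqrt 2) = 1 - 1 / sqrt 2"
proof -
  have sq: "sqrt 2 * sqrt 2 = 2" "0 < sqrt 2" by simp_all
  have "(2 - sqrt 2) * (1 + 1 / sqrt 2) = 1" "(1 - 1 / sqrt 2) * (2 + sqrt 2) = 1"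
    using sq by (simp_all add: field_simps algebra_simps)
  moreover have "1 + 1 / sqrt 2 \<noteq> 0" "2 + sqrt 2 \<noteq> 0"
    using sqrt2_bounds by linarith+
  ultimately show "1 / (1 + 1 / sqrt 2) = 2 - sqrt 2" "1 / (2 + sqrt 2) = 1 - 1 / sqrt 2"
    by (simp_all add: divide_eq_eq)
qed

lemmas one_div_le_one_div = le_imp_inverse_le[unfolded inverse_eq_divide]
lemmas one_div_le_one_div_neg = le_imp_inverse_le_neg[unfolded inverse_eq_divide]

lemma floor_diff_cases:
  fixes s t :: real and d :: int
  assumes "of_int d - 1 < t - s" and "t - s < of_int d"
  shows "\<lfloor>t\<rfloor> = \<lfloor>s\<rfloor> + d - 1 \<or> \<lfloor>t\<rfloor> = \<lfloor>s\<rfloor> + d"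
proof -
  have "real_of_int (\<lfloor>t\<rfloor> - \<lfloor>s\<rfloor>) < of_int (d + 1)"
    and "of_int (d - 2) < real_of_int (\<lfloor>t\<rfloor> - \<lfloor>s\<rfloor>)"
    using assms by linarith+
  then show ?thesis unfolding of_int_less_iff by linarith
qed

lemma floor_add_cases:
  fixes s t :: real and d :: int
  assumes "of_int d - 1 < t + s" and "t + s < of_int d"
  shows "\<lfloor>t\<rfloor> + \<lfloor>s\<rfloor> = d - 2 \<or> \<lfloor>t\<rfloor> + \<lfloor>s\<rfloor> = d - 1"
proof -
  have "real_of_int (\<lfloor>t\<rfloor> + \<lfloor>s\<rfloor>) < of_int d"
    and "of_int (d - 3) < real_of_int (\<lfloor>t\<rfloor> + \<lfloor>s\<rfloor>)"
    using assms by linarith+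
  then show ?thesis unfolding of_int_less_iff by linarith
qed

section \<open>Orbits of the natural extension\<close>

definition orbit_level :: "real \<Rightarrow> nat \<Rightarrow> (real \<times> real) set" where
  "orbit_level b n = (TTalpha b ^^ n) ` ({b - 1..<b} \<times> {0})"

lemma Omega_eq_closure_orbit_levels: "Omega b = (\<Union>n. closure (orbit_level b n))"
  by (simp add: Omega_def orbit_level_def)

lemma orbit_level_Suc: "orbit_level b (Suc n) = TTalpha b ` orbit_level b n"
  by (simp add: orbit_level_def image_comp)

lemma TTalpha_Pair:
  assumes "x \<noteq> 0" and "1 / x = v"
  shows "TTalpha b (x, y) = (v - \<lfloor>v + 1 - b\<rfloor>, 1 / (y + \<lfloor>v + 1 - b\<rfloor>))"
  using assms by (simp add: TTalpha_def Talpha_def)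

lemma TTalpha_zero: "TTalpha b (0, y) = (0, 0)"
  by (simp add: TTalpha_def)

lemma fst_TTalpha_in_domain:
  assumes "0 < b" and "b \<le> 1"
  shows "b - 1 \<le> fst (TTalpha b p) \<and> fst (TTalpha b p) < b"
proof (cases "fst p = 0")
  case False
  have "of_int \<lfloor>1 / fst p + 1 - b\<rfloor> \<le> 1 / fst p + 1 - b"
    and "1 / fst p + 1 - b < of_int \<lfloor>1 / fst p + 1 - b\<rfloor> + 1" by linarith+
  with False show ?thesis by (simp add: TTalpha_def Talpha_def) linarith
qed (use assms in \<open>simp add: TTalpha_def\<close>)

lemma fst_orbit_level_in_domain:
  assumes "0 < b" and "b \<le> 1" and "p \<in> orbit_level b n"
  shows "b - 1 \<le> fst p \<and> fst p < b"
proof (cases n)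
  case 0
  with assms(3) show ?thesis by (auto simp: orbit_level_def)
next
  case (Suc m)
  with assms(3) obtain p' where "p = TTalpha b p'" by (auto simp: orbit_level_Suc)
  with fst_TTalpha_in_domain[OF assms(1,2)] show ?thesis by simp
qed

section \<open>The matching relation\<close>

definition y_cut :: real where "y_cut = 1 - 1 / sqrt 2"

text \<open>The four maps defining S alone are not preserved by one step of the dynamics; the two
  extra maps, admitted only above y_cut, close up the case analysis.\<close>

definition related :: "real \<times> real \<Rightarrow> real \<times> real \<Rightarrow> bool" where
  "related p q \<longleftrightarrow> q \<in> Sset (fst p) (snd p) \<or>
     (y_cut \<le> snd p \<and> q \<in> {(- fst p / (fst p + 1), 1 - snd p), (fst p / (fst p + 1), snd p - 1)})"

lemma related_refl: "related p p"
  by (simp add: related_def Sset_def)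

lemma related_neg: "related (X, Y) (- X, - Y)"
  by (simp add: related_def Sset_def)

lemma related_shift:
  assumes "Y \<noteq> 0"
  shows "related (X, 1 / Y) (X + 1, 1 / (Y - 1))"
proof -
  have "(1 / Y) / (1 - 1 / Y) = 1 / (Y - 1)"
    using assms by (cases "Y = 1") (simp_all add: field_simps)
  then show ?thesis by (simp add: related_def Sset_def)
qed

lemma related_flip:
  assumes "Y \<noteq> 0" and "Y + 1 \<noteq> 0"
  shows "related (X, 1 / Y) (1 - X, 1 / (- Y - 1))"
proof -
  have "- (1 / Y) / (1 / Y + 1) = 1 / (- Y - 1)"
    using assms by (simp add: field_simps)
  then show ?thesis by (simp add: related_def Sset_def)
qed

lemma related_above_cut:
  assumes "y_cut \<le> Y"
  shows "related (X, Y) (- X / (X + 1), 1 - Y)" and "related (X, Y) (X / (X + 1), Y - 1)"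
  using assms by (simp_all add: related_def)

lemma related_below_cut:
  assumes "related p q" and "snd p < y_cut"
  shows "q \<in> Sset (fst p) (snd p)"
  using assms by (auto simp: related_def)

definition shadowed :: "real \<Rightarrow> nat \<Rightarrow> real \<times> real \<Rightarrow> bool" where
  "shadowed b n p \<longleftrightarrow> (\<exists>m \<le> n. \<exists>q \<in> orbit_level b m. related p q)"

lemma shadowedI: "m \<le> n \<Longrightarrow> q \<in> orbit_level b m \<Longrightarrow> related p q \<Longrightarrow> shadowed b n p"
  unfolding shadowed_def by blast

lemma shadowed_mono: "shadowed b m p \<Longrightarrow> m \<le> n \<Longrightarrow> shadowed b n p"
  unfolding shadowed_def by (meson order_trans)

lemma shadowed_by_TTalpha:
  "q \<in> orbit_level b m \<Longrightarrow> related p (TTalpha b q) \<Longrightarrow> shadowed b (Suc m) p"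
  by (intro shadowedI[of "Suc m"]) (auto simp: orbit_level_Suc)

section \<open>An invariant region for \<alpha> \<ge> g\<close>

text \<open>A crude outer bound for the orbits of the natural extension when \<alpha> \<ge> g. Its purpose is to
  keep the denominators y + k of the maps for \<alpha> and \<beta> away from 0.\<close>

definition admissible :: "real \<Rightarrow> real \<times> real \<Rightarrow> bool" where
  "admissible a p \<longleftrightarrow> -1/2 \<le> snd p \<and> snd p \<le> sqrt 2
     \<and> (3 + 1 / (a - 1) < fst p \<longrightarrow> 1 / sqrt 2 - 1 \<le> snd p)
     \<and> (fst p < 1 / a - 1 \<longrightarrow> snd p \<le> 2 - sqrt 2)"

locale golden_pair =
  fixes a b :: real
  assumes golden: "1 \<le> a * a + a" and a_pos: "0 < a" and a_less_b: "a < b" and b_le_1: "b \<le> 1"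
begin

lemma a_less_1: "a < 1"
  using a_less_b b_le_1 by simp

lemma b_pos: "0 < b"
  using a_pos a_less_b by simp

lemma a_lower_bound: "309/500 \<le> a"
proof (rule ccontr)
  assume "\<not> 309/500 \<le> a"
  then have "a * a < (309/500) * a" using a_pos by (simp add: mult_strict_right_mono)
  with golden \<open>\<not> 309/500 \<le> a\<close> show False by linarith
qed

lemma reciprocal_bounds: "1 / a < 1 + b" "1 / b < 1 + a" "1 < a + b"
proof -
  have "a * a < a * b" using a_pos a_less_b by simp
  with golden have "1 < a * (1 + b)" by (simp add: algebra_simps)
  moreover have "1 < b * (1 + a)"
    using golden a_less_b \<open>a * a < a * b\<close> by (simp add: algebra_simps)
  ultimately show "1 / a < 1 + b" "1 / b < 1 + a" using a_pos b_pos by (simp_all add: field_simps)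
  show "1 < a + b" using a_lower_bound a_less_b by simp
qed

lemma reciprocal_a_minus_1: "1 / (a - 1) + 1 - a < -2"
proof -
  define d where "d = 1 - a"
  have d: "0 < d" "d \<le> 191/500" using a_less_1 a_lower_bound by (auto simp: d_def)
  then have "d * d \<le> (191/500) * d" by (intro mult_right_mono) auto
  with d have "d * (d + 2) < 1" by (simp add: distrib_left, linarith)
  with d have "d + 2 < 1 / d" by (simp add: pos_less_divide_eq mult.commute)
  moreover have "1 / (a - 1) = - (1 / d)" by (simp add: d_def divide_simps)
  ultimately show ?thesis unfolding d_def by linarith
qed

lemma three_plus_reciprocal_le: "3 + 1 / (a - 1) \<le> 1 / (2 + a)"
proof -
  have "3 + 1 / (a - 1) = (2 - 3 * a) / (1 - a)" using a_less_1 by (simp add: field_simps)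
  moreover have "(2 - 3 * a) * (2 + a) \<le> 1 - a" using golden by (simp add: algebra_simps)
  then have "(2 - 3 * a) / (1 - a) \<le> 1 / (2 + a)" using a_pos a_less_1 by (simp add: field_simps)
  ultimately show ?thesis by simp
qed

lemma small_digit_imp_large:
  assumes "0 < x" and "\<lfloor>1 / x + 1 - a\<rfloor> \<le> 2"
  shows "3 + 1 / (a - 1) < x"
proof -
  have "1 / x < 2 + a" using assms(2) by linarith
  then have "1 / (2 + a) < x" using assms(1) a_pos by (simp add: field_simps)
  with three_plus_reciprocal_le show ?thesis by linarith
qed

lemma digit_cases:
  assumes "a - 1 \<le> x" and "x < a" and "x \<noteq> 0"
  shows "(0 < x \<and> 1 \<le> \<lfloor>1 / x + 1 - a\<rfloor>) \<or> (x < 0 \<and> \<lfloor>1 / x + 1 - a\<rfloor> \<le> -3)"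
proof (cases "0 < x")
  case True
  then have "1 / a < 1 / x" using assms a_pos by (intro frac_less2) auto
  moreover have "1 \<le> 1 / a" using a_pos a_less_1 by simp
  ultimately show ?thesis using True a_less_1 by (simp add: le_floor_iff)
next
  case False
  with assms have "1 / x \<le> 1 / (a - 1)" by (intro one_div_le_one_div_neg) auto
  with reciprocal_a_minus_1 False assms(3) show ?thesis by (simp add: floor_le_iff)
qed

lemma admissible_TTalpha_pos_digit:
  assumes x: "0 < x" "x < a" and k: "k = \<lfloor>1 / x + 1 - a\<rfloor>" "1 \<le> k"
    and adm: "admissible a (x, y)"
  shows "admissible a (1 / x - k, 1 / (y + k))"
proof -
  have y: "-1/2 \<le> y" "3 + 1 / (a - 1) < x \<Longrightarrow> 1 / sqrt 2 - 1 \<le> y"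
    using adm by (auto simp: admissible_def)
  have x_large: "3 + 1 / (a - 1) < x" if "k \<le> 2"
    using small_digit_imp_large x(1) k(1) that by blast
  have pos: "0 < 1 / (y + k)" using y k(2) by simp
  have le_sqrt2: "1 / (y + k) \<le> sqrt 2"
  proof (cases "k = 1")
    case True
    with x_large y have "1 / sqrt 2 \<le> y + k" by simp
    then have "1 / (y + k) \<le> 1 / (1 / sqrt 2)" by (intro one_div_le_one_div) auto
    then show ?thesis by simp
  next
    case False
    with k(2) have "2 \<le> k" by simp
    with y have "3/2 \<le> y + k" by linarith
    then have "1 / (y + k) \<le> 1 / (3/2)" by (intro one_div_le_one_div) auto
    with sqrt2_bounds show ?thesis by simp
  qed
  have le_2_minus_sqrt2: "1 / (y + k) \<le> 2 - sqrt 2" if "1 / x - k < 1 / a - 1"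
  proof -
    have "1 / a < 1 / x" using x a_pos by (intro frac_less2) auto
    with that k(2) consider "k = 2" | "3 \<le> k" by fastforce
    then show ?thesis
    proof cases
      case 1
      with x_large y have "1 + 1 / sqrt 2 \<le> y + k" by simp
      then have "1 / (y + k) \<le> 1 / (1 + 1 / sqrt 2)"
        by (rule one_div_le_one_div) (use sqrt2_bounds in linarith)
      then show ?thesis using sqrt2_reciprocals by simp
    next
      case 2
      with y have "5/2 \<le> y + k" by linarith
      then have "1 / (y + k) \<le> 1 / (5/2)" by (intro one_div_le_one_div) auto
      with sqrt2_bounds show ?thesis by simp
    qed
  qed
  have "-1/2 \<le> 1 / (y + k)" "1 / sqrt 2 - 1 \<le> 1 / (y + k)" using pos sqrt2_bounds by linarith+
  with le_sqrt2 le_2_minus_sqrt2 show ?thesis unfolding admissible_def by auto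
qed

lemma admissible_TTalpha_neg_digit:
  assumes x: "a - 1 \<le> x" "x < 0" and k: "k = \<lfloor>1 / x + 1 - a\<rfloor>" "k \<le> -3"
    and adm: "admissible a (x, y)"
  shows "admissible a (1 / x - k, 1 / (y + k))"
proof -
  have "1 \<le> 1 / a" using a_pos a_less_1 by simp
  with x adm have y: "y \<le> 2 - sqrt 2" by (auto simp: admissible_def)
  have neg: "1 / (y + k) < 0" using y k(2) sqrt2_bounds by (simp add: divide_less_0_iff)
  have "y + k \<le> -2" using y k(2) sqrt2_bounds by linarith
  then have "1 / -2 \<le> 1 / (y + k)" by (intro one_div_le_one_div_neg) auto
  then have ge: "-1/2 \<le> 1 / (y + k)" by simp
  have far: "1 / sqrt 2 - 1 \<le> 1 / (y + k)" if "3 + 1 / (a - 1) < 1 / x - k"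
  proof -
    have "1 / x \<le> 1 / (a - 1)" using x by (intro one_div_le_one_div_neg) auto
    with that k(2) have "k \<le> -4" by fastforce
    then have "y + k \<le> - (2 + sqrt 2)" using y by linarith
    then have "1 / - (2 + sqrt 2) \<le> 1 / (y + k)"
      using sqrt2_bounds by (intro one_div_le_one_div_neg) auto
    then show ?thesis unfolding divide_minus_right sqrt2_reciprocals by simp
  qed
  have "1 / (y + k) \<le> sqrt 2" "1 / (y + k) \<le> 2 - sqrt 2" using neg sqrt2_bounds by linarith+
  with ge far show ?thesis unfolding admissible_def by auto
qed

lemma admissible_TTalpha:
  assumes "a - 1 \<le> fst p" and "fst p < a" and "admissible a p"
  shows "admissible a (TTalpha a p)"
proof -
  obtain x y where p: "p = (x, y)" by fastforce
  show ?thesis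
  proof (cases "x = 0")
    case True
    have "1 / sqrt 2 < 1" "sqrt 2 < 2" using sqrt2_bounds by auto
    with True show ?thesis by (simp add: p TTalpha_zero admissible_def)
  next
    case False
    have "TTalpha a p = (1 / x - \<lfloor>1 / x + 1 - a\<rfloor>, 1 / (y + \<lfloor>1 / x + 1 - a\<rfloor>))"
      using TTalpha_Pair[OF False refl] p by simp
    with digit_cases[of x] False assms admissible_TTalpha_pos_digit admissible_TTalpha_neg_digit
    show ?thesis by (auto simp: p)
  qed
qed

end

section \<open>One step of the dynamics preserves the matching\<close>

locale matching_step = golden_pair +
  fixes x y :: real
  assumes x_ge: "a - 1 \<le> x" and x_less: "x < a" and x_nonzero: "x \<noteq> 0"
    and adm: "admissible a (x, y)"
begin

definition digit :: int where "digit = \<lfloor>1 / x + 1 - a\<rfloor>"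

lemma TTalpha_xy: "TTalpha a (x, y) = (1 / x - digit, 1 / (y + digit))"
  unfolding digit_def by (rule TTalpha_Pair[OF x_nonzero refl])

lemma digit_sign: "(0 < x \<and> 1 \<le> digit) \<or> (x < 0 \<and> digit \<le> -3)"
  unfolding digit_def using digit_cases[OF x_ge x_less x_nonzero] .

lemma y_bounds: "-1/2 \<le> y" "y \<le> sqrt 2"
  using adm by (auto simp: admissible_def)

lemma y_le_if_neg: "x < 0 \<Longrightarrow> y \<le> 2 - sqrt 2"
proof -
  have "1 \<le> 1 / a" using a_pos a_less_1 by simp
  then show "x < 0 \<Longrightarrow> y \<le> 2 - sqrt 2" using adm by (auto simp: admissible_def)
qed

lemma denominators_nonzero: "y + digit \<noteq> 0" "y + digit + 1 \<noteq> 0"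
proof -
  have "sqrt 2 > 141/100" using sqrt2_bounds by simp
  with digit_sign y_bounds y_le_if_neg
  have "(0 < y + digit \<and> 0 < y + digit + 1) \<or> (y + digit < 0 \<and> y + digit + 1 < 0)" by force
  then show "y + digit \<noteq> 0" "y + digit + 1 \<noteq> 0" by auto
qed

lemma related_TTalpha_forms:
  "related (TTalpha a (x, y)) (1 / x - digit, 1 / (y + digit))"
  "related (TTalpha a (x, y)) (1 / x - digit + 1, 1 / (y + digit - 1))"
  "related (TTalpha a (x, y)) (- (1 / x - digit), - (1 / (y + digit)))"
  "related (TTalpha a (x, y)) (1 - (1 / x - digit), 1 / (- (y + digit) - 1))"
  unfolding TTalpha_xy
  by (rule related_refl related_shift[OF denominators_nonzero(1)] related_neg
      related_flip[OF denominators_nonzero])+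

lemma related_TTalpha_same: "related (TTalpha a (x, y)) (TTalpha b (x, y))"
proof -
  let ?j = "\<lfloor>1 / x + 1 - b\<rfloor>"
  have T: "TTalpha b (x, y) = (1 / x - ?j, 1 / (y + ?j))" by (rule TTalpha_Pair[OF x_nonzero refl])
  have "?j = digit - 1 \<or> ?j = digit"
    unfolding digit_def using floor_diff_cases[of 0 "1 / x + 1 - b" "1 / x + 1 - a"]
      a_less_b a_lower_bound b_le_1 by simp
  then show ?thesis
  proof
    assume "?j = digit - 1"
    then have "TTalpha b (x, y) = (1 / x - digit + 1, 1 / (y + digit - 1))" unfolding T by simp
    with related_TTalpha_forms(2) show ?thesis by simp
  next
    assume "?j = digit"
    with related_TTalpha_forms(1) show ?thesis unfolding T by simp
  qed
qed

lemma related_TTalpha_neg: "related (TTalpha a (x, y)) (TTalpha b (- x, - y))"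
proof -
  let ?j = "\<lfloor>- (1 / x) + 1 - b\<rfloor>"
  have T: "TTalpha b (- x, - y) = (- (1 / x) - ?j, 1 / (- y + ?j))"
    using x_nonzero by (intro TTalpha_Pair) auto
  have "?j + digit = -1 \<or> ?j + digit = 0"
    unfolding digit_def using floor_add_cases[of 1 "- (1 / x) + 1 - b" "1 / x + 1 - a"]
      reciprocal_bounds a_less_b b_le_1 by simp
  then consider "?j = - digit - 1" | "?j = - digit" by linarith
  then show ?thesis
  proof cases
    case 1
    then have "TTalpha b (- x, - y) = (1 - (1 / x - digit), 1 / (- (y + digit) - 1))"
      unfolding T by simp
    with related_TTalpha_forms(4) show ?thesis by simp
  next
    case 2
    then have "TTalpha b (- x, - y) = (- (1 / x - digit), - (1 / (y + digit)))"
      unfolding T 2 of_int_minus minus_add_distrib[symmetric] divide_minus_right by simp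
    with related_TTalpha_forms(3) show ?thesis by simp
  qed
qed

lemma x_plus_1_pos: "0 < x + 1"
  using x_ge a_lower_bound by linarith

lemma related_TTalpha_above_neg: "related (TTalpha a (x, y)) (TTalpha b (- x / (x + 1), 1 - y))"
proof -
  let ?j = "\<lfloor>- 1 - 1 / x + 1 - b\<rfloor>"
  have "1 / (- x / (x + 1)) = - 1 - 1 / x"
    using x_nonzero x_plus_1_pos by (simp add: field_simps)
  then have T: "TTalpha b (- x / (x + 1), 1 - y) = (- 1 - 1 / x - ?j, 1 / (1 - y + ?j))"
    using x_nonzero x_plus_1_pos by (intro TTalpha_Pair) auto
  have "?j + digit = -2 \<or> ?j + digit = -1"
    unfolding digit_def using floor_add_cases[of 0 "- 1 - 1 / x + 1 - b" "1 / x + 1 - a"]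
      reciprocal_bounds a_less_b b_le_1 by simp
  then consider "?j = - digit - 2" | "?j = - digit - 1" by linarith
  then show ?thesis
  proof cases
    case 1
    then have "TTalpha b (- x / (x + 1), 1 - y) = (1 - (1 / x - digit), 1 / (- (y + digit) - 1))"
      unfolding T by (simp add: algebra_simps)
    with related_TTalpha_forms(4) show ?thesis by simp
  next
    case 2
    then have "TTalpha b (- x / (x + 1), 1 - y) = (- (1 / x - digit), 1 / - (y + digit))"
      unfolding T by (simp add: algebra_simps)
    with related_TTalpha_forms(3) show ?thesis by (simp only: divide_minus_right)
  qed
qed

lemma related_TTalpha_above_pos: "related (TTalpha a (x, y)) (TTalpha b (x / (x + 1), y - 1))"
proof -
  let ?j = "\<lfloor>1 + 1 / x + 1 - b\<rfloor>"
  have "1 / (x / (x + 1)) = 1 + 1 / x"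
    using x_nonzero x_plus_1_pos by (simp add: field_simps)
  then have T: "TTalpha b (x / (x + 1), y - 1) = (1 + 1 / x - ?j, 1 / (y - 1 + ?j))"
    using x_nonzero x_plus_1_pos by (intro TTalpha_Pair) auto
  have "?j = digit \<or> ?j = digit + 1"
    unfolding digit_def using floor_diff_cases[of 1 "1 + 1 / x + 1 - b" "1 / x + 1 - a"]
      a_less_b a_lower_bound b_le_1 by simp
  then show ?thesis
  proof
    assume "?j = digit"
    then have "TTalpha b (x / (x + 1), y - 1) = (1 / x - digit + 1, 1 / (y + digit - 1))"
      unfolding T by (simp add: algebra_simps)
    with related_TTalpha_forms(2) show ?thesis by simp
  next
    assume "?j = digit + 1"
    then have "TTalpha b (x / (x + 1), y - 1) = (1 / x - digit, 1 / (y + digit))"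
      unfolding T by (simp add: algebra_simps)
    with related_TTalpha_forms(1) show ?thesis by simp
  qed
qed

lemma related_TTalpha_shift:
  assumes "x + 1 < b"
  shows "related (TTalpha a (x, y)) (TTalpha b (TTalpha b (x + 1, y / (1 - y))))"
proof -
  have "x < 0" using assms b_le_1 by simp
  with y_le_if_neg sqrt2_bounds have y: "y < 1" by fastforce
  have "1 / 1 \<le> 1 / (x + 1)" using x_plus_1_pos \<open>x < 0\<close> by (intro one_div_le_one_div) auto
  moreover have "1 / (x + 1) \<le> 1 / a" using x_ge a_pos by (intro one_div_le_one_div) auto
  ultimately have "\<lfloor>1 / (x + 1) + 1 - b\<rfloor> = 1"
    unfolding floor_eq_iff using reciprocal_bounds b_le_1 by simp
  moreover have "1 / (x + 1) - 1 = - x / (x + 1)" using x_plus_1_pos by (simp add: field_simps)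
  moreover have "1 / (y / (1 - y) + 1) = 1 - y" using y by (simp add: field_simps)
  ultimately have "TTalpha b (x + 1, y / (1 - y)) = (- x / (x + 1), 1 - y)"
    using TTalpha_Pair[of "x + 1" "1 / (x + 1)" b "y / (1 - y)"] x_plus_1_pos by simp
  with related_TTalpha_above_neg show ?thesis by simp
qed

lemma related_TTalpha_flip_small:
  assumes "0 < x" and "x < b / (1 + b)"
  shows "related (TTalpha a (x, y)) (TTalpha b (TTalpha b (1 - x, - y / (y + 1))))"
proof -
  have x1: "0 < 1 - x" using assms x_less a_less_1 by simp
  have y: "0 < y + 1" using y_bounds by simp
  have "1 / 1 \<le> 1 / (1 - x)" using x1 assms by (intro one_div_le_one_div) auto
  moreover have "x * (1 + b) < b" using assms b_pos by (simp add: field_simps)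
  then have "1 / (1 - x) < 1 + b" using x1 by (simp add: field_simps)
  ultimately have "\<lfloor>1 / (1 - x) + 1 - b\<rfloor> = 1" unfolding floor_eq_iff using b_le_1 by simp
  moreover have "1 / (1 - x) - 1 = x / (1 - x)" using x1 by (simp add: field_simps)
  moreover have "1 / (- y / (y + 1) + 1) = y + 1" using y by (simp add: field_simps)
  ultimately have T1: "TTalpha b (1 - x, - y / (y + 1)) = (x / (1 - x), y + 1)"
    using TTalpha_Pair[of "1 - x" "1 / (1 - x)" b "- y / (y + 1)"] x1 by simp
  let ?j = "\<lfloor>1 / x - 1 + 1 - b\<rfloor>"
  have "1 / (x / (1 - x)) = 1 / x - 1" using assms x1 by (simp add: field_simps)
  then have T2: "TTalpha b (x / (1 - x), y + 1) = (1 / x - 1 - ?j, 1 / (y + 1 + ?j))"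
    using assms x1 by (intro TTalpha_Pair) auto
  have "?j = digit - 2 \<or> ?j = digit - 1"
    unfolding digit_def using floor_diff_cases[of "-1" "1 / x - 1 + 1 - b" "1 / x + 1 - a"]
      a_less_b a_lower_bound b_le_1 by simp
  then show ?thesis
  proof
    assume "?j = digit - 2"
    then have "TTalpha b (x / (1 - x), y + 1) = (1 / x - digit + 1, 1 / (y + digit - 1))"
      unfolding T2 by (simp add: algebra_simps)
    with related_TTalpha_forms(2) show ?thesis unfolding T1 by simp
  next
    assume "?j = digit - 1"
    then have "TTalpha b (x / (1 - x), y + 1) = (1 / x - digit, 1 / (y + digit))"
      unfolding T2 by (simp add: algebra_simps)
    with related_TTalpha_forms(1) show ?thesis unfolding T1 by simp
  qed
qed

lemma y_cut_le_reciprocal: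
  assumes "0 \<le> c" and "c \<le> 1"
  shows "y_cut \<le> 1 / (y + 1 + c)"
proof -
  have "1 / (2 + sqrt 2) \<le> 1 / (y + 1 + c)"
    using y_bounds assms by (intro one_div_le_one_div) auto
  then show ?thesis using sqrt2_reciprocals by (simp add: y_cut_def)
qed

lemma related_flip_digit_1:
  assumes "digit = 1"
  shows "related (TTalpha a (x, y)) (1 - x, - y / (y + 1))"
proof -
  have "0 < y + 1" using y_bounds by simp
  have "1 - x = (1 / x - 1) / ((1 / x - 1) + 1)" using x_nonzero by (simp add: field_simps)
  moreover have "- y / (y + 1) = 1 / (y + 1) - 1" using \<open>0 < y + 1\<close> by (simp add: field_simps)
  moreover have "y_cut \<le> 1 / (y + 1)" using y_cut_le_reciprocal[of 0] by simp
  ultimately show ?thesis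
    using related_above_cut(2)[of "1 / (y + 1)" "1 / x - 1"] by (simp add: TTalpha_xy assms)
qed

lemma related_flip_digit_2:
  assumes x_large: "b / (1 + b) \<le> x" and "digit = 2"
  shows "related (TTalpha a (x, y)) (TTalpha b (1 - x, - y / (y + 1)))"
proof -
  have "0 < b / (1 + b)" using b_pos by simp
  with x_large have "0 < x" by linarith
  have x1: "0 < 1 - x" using x_less a_less_1 by simp
  have y: "0 < y + 1" using y_bounds by simp
  have "2 \<le> 1 / x + 1 - a" using assms(2) unfolding digit_def by linarith
  then have "1 / (1 / x) \<le> 1 / (1 + a)" using a_pos by (intro one_div_le_one_div) auto
  then have "a / (1 + a) \<le> 1 - x" using a_pos by (simp add: field_simps)
  then have "1 / (1 - x) \<le> 1 / (a / (1 + a))" using a_pos by (intro one_div_le_one_div) auto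
  then have upper: "1 / (1 - x) \<le> 1 + 1 / a" using a_pos by (simp add: field_simps)
  have "1 - x \<le> 1 / (1 + b)" using x_large b_pos by (simp add: field_simps)
  then have "1 / (1 / (1 + b)) \<le> 1 / (1 - x)" using x1 by (intro one_div_le_one_div) auto
  with upper have "\<lfloor>1 / (1 - x) + 1 - b\<rfloor> = 2"
    unfolding floor_eq_iff using reciprocal_bounds by simp
  moreover have "1 / (1 - x) - 2 = - (1 / x - 2) / ((1 / x - 2) + 1)"
    using \<open>0 < x\<close> x1 by (simp add: field_simps)
  moreover have "1 / (- y / (y + 1) + 2) = 1 - 1 / (y + 2)" using y by (simp add: field_simps)
  ultimately have "TTalpha b (1 - x, - y / (y + 1)) = (- (1 / x - 2) / ((1 / x - 2) + 1), 1 - 1 / (y + 2))"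
    using TTalpha_Pair[of "1 - x" "1 / (1 - x)" b "- y / (y + 1)"] x1 by simp
  moreover have "y_cut \<le> 1 / (y + 2)" using y_cut_le_reciprocal[of 1] by (simp add: add.commute)
  ultimately show ?thesis
    using related_above_cut(1)[of "1 / (y + 2)" "1 / x - 2"] by (simp add: TTalpha_xy assms(2))
qed

lemma digit_le_2_if_large: "b / (1 + b) \<le> x \<Longrightarrow> digit \<le> 2"
proof -
  assume "b / (1 + b) \<le> x"
  then have "1 / x \<le> 1 / (b / (1 + b))" using b_pos by (intro one_div_le_one_div) auto
  then have "1 / x \<le> 1 + 1 / b" using b_pos by (simp add: field_simps)
  then have "real_of_int digit < 3" unfolding digit_def using reciprocal_bounds by linarith
  then show "digit \<le> 2" by simp
qed

lemma shadowed_TTalpha_shift: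
  assumes "(x + 1, y / (1 - y)) \<in> orbit_level b m"
  shows "shadowed b (Suc (Suc m)) (TTalpha a (x, y))"
proof -
  have "x + 1 < b" using fst_orbit_level_in_domain[OF b_pos b_le_1 assms] by simp
  with assms related_TTalpha_shift show ?thesis
    by (intro shadowedI[of "Suc (Suc m)"]) (auto simp: orbit_level_Suc)
qed

lemma shadowed_TTalpha_flip:
  assumes q: "(1 - x, - y / (y + 1)) \<in> orbit_level b m"
  shows "shadowed b (Suc (Suc m)) (TTalpha a (x, y))"
proof -
  have "0 < x" using fst_orbit_level_in_domain[OF b_pos b_le_1 q] b_le_1 by simp
  show ?thesis
  proof (cases "x < b / (1 + b)")
    case True
    with q related_TTalpha_flip_small \<open>0 < x\<close> show ?thesis
      by (intro shadowedI[of "Suc (Suc m)"]) (auto simp: orbit_level_Suc)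
  next
    case False
    with digit_sign digit_le_2_if_large \<open>0 < x\<close> consider "digit = 1" | "digit = 2" by fastforce
    then show ?thesis
    proof cases
      case 1
      with q related_flip_digit_1 show ?thesis by (intro shadowedI[of m]) auto
    next
      case 2
      with q related_flip_digit_2 False have "shadowed b (Suc m) (TTalpha a (x, y))"
        by (intro shadowed_by_TTalpha) auto
      then show ?thesis by (rule shadowed_mono) simp
    qed
  qed
qed

lemma shadowed_TTalpha_of_related:
  assumes q: "q \<in> orbit_level b m" and rel: "related (x, y) q"
  shows "shadowed b (Suc (Suc m)) (TTalpha a (x, y))"
proof -
  have one_step: "shadowed b (Suc (Suc m)) (TTalpha a (x, y))"
    if "related (TTalpha a (x, y)) (TTalpha b q)"
    using shadowed_by_TTalpha[OF q that] by (rule shadowed_mono) simp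
  from rel consider "q = (x, y)" | "q = (- x, - y)" | "q = (x + 1, y / (1 - y))"
    | "q = (1 - x, - y / (y + 1))" | "q = (- x / (x + 1), 1 - y)" | "q = (x / (x + 1), y - 1)"
    unfolding related_def Sset_def by auto
  then show ?thesis
  proof cases
    case 3
    with q show ?thesis by (simp add: shadowed_TTalpha_shift)
  next
    case 4
    with q show ?thesis by (simp add: shadowed_TTalpha_flip)
  qed (use one_step related_TTalpha_same related_TTalpha_neg related_TTalpha_above_neg
      related_TTalpha_above_pos in auto)
qed

end

context golden_pair
begin

lemma shadowed_TTalpha:
  assumes "a - 1 \<le> fst p" and "fst p < a" and "admissible a p" and "shadowed b n p"
  shows "shadowed b (Suc (Suc n)) (TTalpha a p)"
proof -
  obtain x y where p: "p = (x, y)" by fastforce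
  show ?thesis
  proof (cases "x = 0")
    case True
    have "(0, 0) \<in> orbit_level b 0" using b_pos b_le_1 by (auto simp: orbit_level_def)
    with True show ?thesis by (intro shadowedI[of 0]) (auto simp: p TTalpha_zero related_refl)
  next
    case False
    interpret matching_step a b x y
      using False assms(1-3) by unfold_locales (auto simp: p)
    from assms(4) obtain m q where "m \<le> n" "q \<in> orbit_level b m" "related (x, y) q"
      by (auto simp: shadowed_def p)
    then have "shadowed b (Suc (Suc m)) (TTalpha a (x, y))" by (intro shadowed_TTalpha_of_related)
    with \<open>m \<le> n\<close> show ?thesis unfolding p by (auto elim: shadowed_mono)
  qed
qed

lemma orbit_level_admissible_shadowed:
  "p \<in> orbit_level a n \<Longrightarrow> admissible a p \<and> shadowed b (2 * n) p"
proof (induction n arbitrary: p)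
  case 0
  then obtain x0 where x0: "a - 1 \<le> x0" "x0 < a" and p: "p = (x0, 0)"
    by (auto simp: orbit_level_def)
  have "1 / sqrt 2 < 1" "sqrt 2 < 2" using sqrt2_bounds by auto
  then have "admissible a p" by (simp add: p admissible_def)
  moreover have "shadowed b 0 p"
  proof (cases "b - 1 \<le> x0")
    case True
    with x0 a_less_b have "p \<in> orbit_level b 0" by (simp add: p orbit_level_def)
    then show ?thesis using related_refl[of p] by (intro shadowedI[of 0]) auto
  next
    case False
    with x0 a_less_b b_le_1 a_lower_bound have "(x0 + 1, 0) \<in> orbit_level b 0"
      by (simp add: orbit_level_def)
    moreover have "related p (x0 + 1, 0)" by (simp add: p related_def Sset_def)
    ultimately show ?thesis by (intro shadowedI[of 0]) auto
  qed
  ultimately show ?case by simp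
next
  case (Suc n)
  then obtain p' where p': "p' \<in> orbit_level a n" and p: "p = TTalpha a p'"
    by (auto simp: orbit_level_Suc)
  have dom: "a - 1 \<le> fst p'" "fst p' < a"
    using fst_orbit_level_in_domain[OF a_pos less_imp_le[OF a_less_1] p'] by auto
  from Suc.IH[OF p'] have "admissible a p'" and "shadowed b (2 * n) p'" by auto
  then have "admissible a p" and "shadowed b (Suc (Suc (2 * n))) p"
    unfolding p using admissible_TTalpha[OF dom] shadowed_TTalpha[OF dom] by blast+
  then show ?case by simp
qed

end

section \<open>Passing to the closure\<close>

lemma closure_finite_cover_image:
  fixes f :: "'i \<Rightarrow> 'a::topological_space \<Rightarrow> 'b::topological_space"
  assumes "finite I" and "x \<in> closure A"
    and cont: "\<And>i. i \<in> I \<Longrightarrow> continuous_on (closure A) (f i)"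
    and cover: "\<And>p. p \<in> A \<Longrightarrow> \<exists>i\<in>I. f i p \<in> B i"
  shows "\<exists>i\<in>I. f i x \<in> closure (B i)"
proof -
  define C where "C i = {p \<in> A. f i p \<in> B i}" for i
  have "A \<subseteq> (\<Union>i\<in>I. C i)" using cover by (auto simp: C_def)
  also have "\<dots> \<subseteq> (\<Union>i\<in>I. closure (C i))" using closure_subset by blast
  finally have "closure A \<subseteq> (\<Union>i\<in>I. closure (C i))"
    by (rule closure_minimal) (simp add: closed_UN assms(1))
  with assms(2) obtain i where i: "i \<in> I" "x \<in> closure (C i)" by blast
  have "closure (C i) \<subseteq> closure A" by (rule closure_mono) (auto simp: C_def)
  with cont[OF i(1)] have "continuous_on (closure (C i)) (f i)" by (rule continuous_on_subset)
  moreover have "f i ` C i \<subseteq> closure (B i)" using closure_subset by (auto simp: C_def)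
  ultimately have "f i ` closure (C i) \<subseteq> closure (B i)"
    by (rule image_closure_subset[OF _ closed_closure])
  with i show ?thesis by blast
qed

definition S_maps :: "(real \<times> real \<Rightarrow> real \<times> real) set" where
  "S_maps = {\<lambda>p. p, \<lambda>p. (- fst p, - snd p), \<lambda>p. (fst p + 1, snd p / (1 - snd p)),
    \<lambda>p. (1 - fst p, - snd p / (snd p + 1))}"

lemma Sset_eq_image_S_maps: "Sset (fst p) (snd p) = (\<lambda>g. g p) ` S_maps"
  by (auto simp: Sset_def S_maps_def)

lemma finite_S_maps: "finite S_maps"
  by (simp add: S_maps_def)

lemma continuous_on_S_maps: "g \<in> S_maps \<Longrightarrow> continuous_on {p. -1 < snd p \<and> snd p < 1} g"
  unfolding S_maps_def by (auto intro!: continuous_intros)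

context golden_pair
begin

lemma orbit_level_below_cut_S_image:
  assumes "p \<in> orbit_level a n" and "snd p < y_cut"
  shows "\<exists>i\<in>S_maps \<times> {..2 * n}. fst i p \<in> orbit_level b (snd i)"
proof -
  from assms orbit_level_admissible_shadowed[of p n] obtain m q where
    m: "m \<le> 2 * n" and q: "q \<in> orbit_level b m" and "related p q"
    by (auto simp: shadowed_def)
  with assms(2) have "q \<in> (\<lambda>g. g p) ` S_maps"
    using related_below_cut[of p q] Sset_eq_image_S_maps[of p] by simp
  then obtain g where "g \<in> S_maps" "q = g p" by blast
  with m q show ?thesis by (intro bexI[of _ "(g, m)"]) auto
qed

lemma S_image_of_closure_below_cut:
  assumes "(x, y) \<in> closure (orbit_level a n)" and "y < y_cut"
  shows "\<exists>g\<in>S_maps. \<exists>m. g (x, y) \<in> closure (orbit_level b m)"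
proof -
  define A where "A = {p. snd p < y_cut} \<inter> orbit_level a n"
  have "open {p :: real \<times> real. snd p < y_cut}"
    by (intro open_Collect_less continuous_intros)
  with assms have xy: "(x, y) \<in> closure A"
    unfolding A_def using open_Int_closure_subset by fastforce
  have "A \<subseteq> {p. -1/2 \<le> snd p \<and> snd p \<le> y_cut}"
    using orbit_level_admissible_shadowed by (auto simp: A_def admissible_def)
  then have "closure A \<subseteq> {p. -1/2 \<le> snd p \<and> snd p \<le> y_cut}"
    by (rule closure_minimal) (intro closed_Collect_conj closed_Collect_le continuous_intros)
  moreover have "y_cut < 1" by (simp add: y_cut_def)
  ultimately have strip: "closure A \<subseteq> {p. -1 < snd p \<and> snd p < 1}" by auto
  have "continuous_on (closure A) (fst i)" if "i \<in> S_maps \<times> {..2 * n}" for i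
    using continuous_on_subset[OF continuous_on_S_maps strip] that by auto
  with xy orbit_level_below_cut_S_image
  have "\<exists>i\<in>S_maps \<times> {..2 * n}. fst i (x, y) \<in> closure (orbit_level b (snd i))"
    by (intro closure_finite_cover_image) (auto simp: A_def finite_S_maps)
  then show ?thesis by auto
qed

end

theorem lemma4p5:
  fixes \<alpha> \<beta> x y :: real
  assumes "(sqrt 5 - 1) / 2 \<le> \<alpha>" and "\<alpha> < \<beta>" and "\<beta> \<le> 1"
    and "(x, y) \<in> Omega \<alpha>" and "y < 1 - 1 / sqrt 2"
  shows "Sset x y \<inter> Omega \<beta> \<noteq> {}"
proof -
  interpret golden_pair \<alpha> \<beta>
    using golden_conjugate_le_imp[OF assms(1)] assms(2,3) by unfold_locales
  from assms(4) obtain n where "(x, y) \<in> closure (orbit_level \<alpha> n)"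
    by (auto simp: Omega_eq_closure_orbit_levels)
  moreover have "y < y_cut" using assms(5) by (simp add: y_cut_def)
  ultimately obtain g m where "g \<in> S_maps" and "g (x, y) \<in> closure (orbit_level \<beta> m)"
    using S_image_of_closure_below_cut by blast
  then have "g (x, y) \<in> Sset x y \<inter> Omega \<beta>"
    using Sset_eq_image_S_maps[of "(x, y)"] by (auto simp: Omega_eq_closure_orbit_levels)
  then show ?thesis by blast
qed

end
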